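(* Let $L>0$, let $K$ be a positive integer, $\Delta x = L/K$, let $\Delta t>0$, $\alpha\in\mathbb{R}$, $\beta\in\mathbb{R}\setminus\{0\}$, and $q>1$. Suppose $u^{(0)},u^{(1)},\dots,u^{(m)}$ are $K$-periodic grid functions such that, for each $n=0,\dots,m-1$, $u^{(n+1)}$ is a solution of the energy-conservative scheme at step $n$ (see context), and let $r$ satisfy $$ r \ge \max_{m'\le m}\|u^{(m')}\|_\infty . $$ Define $$\varepsilon_1(q,r,\Delta x) = (q-1)(\Delta x)^3\left[\frac{|\alpha|}{6}(\Delta x)^2(q^2+q+1)r + \frac{3}{2}|\beta|(q+1)\right]^{-1},$$ $$\varepsilon_2(q,r,\Delta x) = (\Delta x)^3\left[\frac{|\alpha|}{6}(\Delta x)^2(2q+1)r + \frac{3}{2}|\beta|\right]^{-1}.$$ If $\Delta t < \min\{\varepsilon_1(q,r,\Delta x),\varepsilon_2(q,r,\Delta x)\}$, then the scheme at step $m$ admits a unique solution $u^{(m+1)}$ satisfying $\|u^{(m+1)}\|_\infty \le qr$.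
   Context: Grid functions are real sequences $v=(v_k)_{k\in\mathbb{Z}}$ with $v_{k+K}=v_k$. Define $\delta^{\langle 1\rangle}_x v_k = (v_{k+1}-v_{k-1})/(2\Delta x)$, $\delta^{\langle 2\rangle}_x v_k = (v_{k+1}-2v_k+v_{k-1})/(\Delta x)^2$, and $\|v\|_\infty=\max_k|v_k|$. For a sequence of grid functions $v^{(n)}$, let $\delta^+_t v^{(n)}_k = (v^{(n+1)}_k - v^{(n)}_k)/\Delta t$ and $\mu^+_t v^{(n)}_k = (v^{(n+1)}_k+v^{(n)}_k)/2$. Given $u^{(n)}$, a grid function $u^{(n+1)}$ is a solution of the scheme at step $n$ if for all $k\in\mathbb{Z}$ $$\delta^+_t u^{(n)}_k = -\frac{\alpha}{6}\,\delta^{\langle 1\rangle}_x\Big\{(u^{(n+1)}_k)^2 + u^{(n+1)}_k u^{(n)}_k + (u^{(n)}_k)^2\Big\} + \beta\,\delta^{\langle 1\rangle}_x\delta^{\langle 2\rangle}_x \mu^+_t u^{(n)}_k .$$ This is a discretization of the KdV equation $u_t=-\alpha u u_x+\beta u_{xxx}$ with $L$-periodic boundary conditions. *)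

theory Defs
  imports Complex_Main
begin

definition periodic_grid :: "nat \<Rightarrow> (int \<Rightarrow> real) \<Rightarrow> bool" where
  "periodic_grid K v \<longleftrightarrow> (\<forall>k. v (k + int K) = v k)"

definition delta1 :: "real \<Rightarrow> (int \<Rightarrow> real) \<Rightarrow> int \<Rightarrow> real" where
  "delta1 dx v k = (v (k + 1) - v (k - 1)) / (2 * dx)"

definition delta2 :: "real \<Rightarrow> (int \<Rightarrow> real) \<Rightarrow> int \<Rightarrow> real" where
  "delta2 dx v k = (v (k + 1) - 2 * v k + v (k - 1)) / dx ^ 2"

text \<open>Maximum norm of a K-periodic grid function (max over one period = max over all k).\<close>
definition grid_norm :: "nat \<Rightarrow> (int \<Rightarrow> real) \<Rightarrow> real" where
  "grid_norm K v = Max ((\<lambda>k. \<bar>v k\<bar>) ` {0..<int K})"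

definition scheme_sol :: "real \<Rightarrow> real \<Rightarrow> real \<Rightarrow> real \<Rightarrow> (int \<Rightarrow> real) \<Rightarrow> (int \<Rightarrow> real) \<Rightarrow> bool" where
  "scheme_sol \<alpha> \<beta> dx dt v w \<longleftrightarrow>
     (\<forall>k. (w k - v k) / dt =
        - (\<alpha> / 6) * delta1 dx (\<lambda>j. (w j)\<^sup>2 + w j * v j + (v j)\<^sup>2) k
        + \<beta> * delta1 dx (delta2 dx (\<lambda>j. (w j + v j) / 2)) k)"

definition eps1 :: "real \<Rightarrow> real \<Rightarrow> real \<Rightarrow> real \<Rightarrow> real \<Rightarrow> real" where
  "eps1 \<alpha> \<beta> q r dx = (q - 1) * dx ^ 3 /
     (\<bar>\<alpha>\<bar> / 6 * dx\<^sup>2 * (q\<^sup>2 + q + 1) * r + 3 / 2 * \<bar>\<beta>\<bar> * (q + 1))"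

definition eps2 :: "real \<Rightarrow> real \<Rightarrow> real \<Rightarrow> real \<Rightarrow> real \<Rightarrow> real" where
  "eps2 \<alpha> \<beta> q r dx = dx ^ 3 /
     (\<bar>\<alpha>\<bar> / 6 * dx\<^sup>2 * (2 * q + 1) * r + 3 / 2 * \<bar>\<beta>\<bar>)"

end

(* Solved for the new time level, the scheme reads w = Phi(w) with
   Phi(w) = v + dt F(w, v), v the previous level.  The difference quotients
   delta1 and delta1 delta2 cost factors 1/dx and 3/dx^3 in the sup norm, and the
   nonlinearity factors as w^2 + w v - z^2 - z v = (w - z)(w + z + v); hence
   dt < eps1 makes Phi map the ball of radius q r into itself and dt < eps2 makes it
   a sup-norm contraction there.  Picard iteration gives a unique fixed point among
   ALL bounded grid functions.  As v is K-periodic, Phi commutes with the shift by K,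
   so the shifted fixed point is again one and must coincide with it: the solution
   is periodic. *)

theory Submission
  imports Defs
begin

(* Banach's fixed-point theorem for the sup distance, redone with Picard iterates:
   the library's complete function space int =>C real needs a metric on the domain,
   which int lacks. *)
locale sup_contraction =
  fixes \<Phi> :: "('a \<Rightarrow> 'b::banach) \<Rightarrow> 'a \<Rightarrow> 'b" and R c :: real
  assumes radius_nonneg: "0 \<le> R" and factor_nonneg: "0 \<le> c" and factor_less_1: "c < 1"
    and maps_to: "\<And>v x. (\<And>y. norm (v y) \<le> R) \<Longrightarrow> norm (\<Phi> v x) \<le> R"
    and contracts: "\<And>v w D x. (\<And>y. norm (v y) \<le> R) \<Longrightarrow> (\<And>y. norm (w y) \<le> R) \<Longrightarrow>
      (\<And>y. norm (v y - w y) \<le> D) \<Longrightarrow> norm (\<Phi> v x - \<Phi> w x) \<le> c * D"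
begin

definition iterate :: "nat \<Rightarrow> 'a \<Rightarrow> 'b"
  where "iterate n = (\<Phi> ^^ n) (\<lambda>_. 0)"

definition tail_bound :: "nat \<Rightarrow> real"
  where "tail_bound n = c ^ n * R / (1 - c)"

lemma norm_iterate_le: "norm (iterate n x) \<le> R"
  by (induction n arbitrary: x) (simp_all add: iterate_def radius_nonneg maps_to)

lemma norm_iterate_step_le: "norm (iterate (Suc n) x - iterate n x) \<le> c ^ n * R"
proof (induction n arbitrary: x)
  case 0
  then show ?case
    using norm_iterate_le[of 1 x] by (simp add: iterate_def)
next
  case (Suc n)
  have "norm (\<Phi> (iterate (Suc n)) x - \<Phi> (iterate n) x) \<le> c * (c ^ n * R)"
    by (rule contracts) (use norm_iterate_le Suc.IH in auto)
  then show ?case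
    by (simp add: iterate_def)
qed

lemma tail_bound_Suc: "tail_bound (Suc n) = c * tail_bound n"
  by (simp add: tail_bound_def)

lemma tail_bound_diff: "tail_bound n - tail_bound (Suc n) = c ^ n * R"
proof -
  have "tail_bound n - tail_bound (Suc n) = c ^ n * R * (1 - c) / (1 - c)"
    by (simp add: tail_bound_def algebra_simps diff_divide_distrib)
  then show ?thesis
    using factor_less_1 by simp
qed

lemma tail_bound_nonneg: "tail_bound n \<ge> 0"
  using radius_nonneg factor_nonneg factor_less_1 by (simp add: tail_bound_def)

lemma factor_power_LIMSEQ: "(\<lambda>n. c ^ n) \<longlonglongrightarrow> 0"
  using factor_nonneg factor_less_1 by (intro LIMSEQ_power_zero) simp

lemma tail_bound_LIMSEQ: "tail_bound \<longlonglongrightarrow> 0"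
  unfolding tail_bound_def by (intro tendsto_divide_zero tendsto_mult_left_zero factor_power_LIMSEQ)

lemma norm_iterate_diff_le:
  assumes "n \<le> m"
  shows "norm (iterate m x - iterate n x) \<le> tail_bound n"
proof -
  have telescope: "norm (iterate (n + j) x - iterate n x) \<le> tail_bound n - tail_bound (n + j)" for j
  proof (induction j)
    case (Suc j)
    have "norm (iterate (Suc (n + j)) x - iterate n x) \<le> c ^ (n + j) * R + (tail_bound n - tail_bound (n + j))"
      by (rule norm_diff_triangle_le[OF norm_iterate_step_le Suc.IH])
    then show ?case
      using tail_bound_diff[of "n + j"] by simp
  qed simp
  obtain j where "m = n + j"
    using assms le_Suc_ex by blast
  then show ?thesis
    using telescope[of j] tail_bound_nonneg[of "n + j"] by simp
qed

lemma iterate_Cauchy: "Cauchy (\<lambda>n. iterate n x)"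
proof (rule metric_CauchyI)
  fix e :: real assume "e > 0"
  then obtain N where "\<forall>n\<ge>N. norm (tail_bound n - 0) < e / 2"
    using LIMSEQ_D[OF tail_bound_LIMSEQ, of "e / 2"] by auto
  then have "norm (tail_bound N - 0) < e / 2"
    by blast
  then have "tail_bound N < e / 2"
    by simp
  then have "dist (iterate m x) (iterate n x) < e" if "N \<le> m" "N \<le> n" for m n
    using norm_iterate_diff_le[OF that(1), of x] norm_iterate_diff_le[OF that(2), of x]
      norm_triangle_ineq4[of "iterate m x - iterate N x" "iterate n x - iterate N x"]
    by (simp add: dist_norm)
  then show "\<exists>N. \<forall>m\<ge>N. \<forall>n\<ge>N. dist (iterate m x) (iterate n x) < e"
    by blast
qed

lemma ex_fixpoint: "\<exists>w. (\<forall>x. norm (w x) \<le> R) \<and> \<Phi> w = w"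
proof -
  define w where "w x = lim (\<lambda>n. iterate n x)" for x
  have iterate_lim: "(\<lambda>n. iterate n x) \<longlonglongrightarrow> w x" for x
    unfolding w_def using iterate_Cauchy[of x] by (simp add: Cauchy_convergent_iff convergent_LIMSEQ_iff)
  have w_bound: "norm (w x) \<le> R" for x
    by (rule LIMSEQ_le_const2[OF tendsto_norm[OF iterate_lim]]) (simp add: norm_iterate_le)
  have w_close: "norm (w x - iterate n x) \<le> tail_bound n" for n x
    by (rule LIMSEQ_le_const2[OF tendsto_norm[OF tendsto_diff[OF iterate_lim tendsto_const]]])
      (use norm_iterate_diff_le in auto)
  have bound: "norm (\<Phi> w x - w x) \<le> 2 * tail_bound n" for n x
  proof -
    have "\<Phi> (iterate n) = iterate (Suc n)"
      by (simp add: iterate_def)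
    then have "norm (\<Phi> w x - w x) \<le> norm (\<Phi> w x - \<Phi> (iterate n) x) + norm (w x - iterate (Suc n) x)"
      using norm_triangle_ineq4[of "\<Phi> w x - iterate (Suc n) x" "w x - iterate (Suc n) x"] by simp
    also have "\<dots> \<le> c * tail_bound n + tail_bound (Suc n)"
      using w_bound norm_iterate_le w_close by (intro add_mono contracts) auto
    also have "\<dots> \<le> 2 * tail_bound n"
      using factor_less_1 tail_bound_nonneg[of n] mult_left_le_one_le[of "tail_bound n" c] factor_nonneg
      by (simp add: tail_bound_Suc)
    finally show ?thesis .
  qed
  have "norm (\<Phi> w x - w x) \<le> 0" for x
    by (rule LIMSEQ_le_const[OF tendsto_mult_right_zero[OF tail_bound_LIMSEQ]]) (use bound in blast)
  then have "\<Phi> w = w"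
    by (intro ext) simp
  with w_bound show ?thesis
    by blast
qed

lemma fixpoint_unique:
  assumes "\<And>x. norm (v x) \<le> R" "\<Phi> v = v" and "\<And>x. norm (w x) \<le> R" "\<Phi> w = w"
  shows "v = w"
proof
  fix x
  have close: "norm (v y - w y) \<le> c ^ n * (2 * R)" for n y
  proof (induction n arbitrary: y)
    case 0
    then show ?case
      using assms(1,3)[of y] norm_triangle_ineq4[of "v y" "w y"] by simp
  next
    case (Suc n)
    have "norm (\<Phi> v y - \<Phi> w y) \<le> c * (c ^ n * (2 * R))"
      by (rule contracts) (use assms Suc.IH in auto)
    then show ?case
      using assms(2,4) by (simp add: mult.assoc)
  qed
  have "norm (v x - w x) \<le> 0"
    using close by (intro LIMSEQ_le_const[OF tendsto_mult_left_zero[OF factor_power_LIMSEQ]]) auto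
  then show "v x = w x"
    by simp
qed

theorem ex1_fixpoint: "\<exists>!w. (\<forall>x. norm (w x) \<le> R) \<and> \<Phi> w = w"
  using ex_fixpoint fixpoint_unique by blast

end

lemma periodic_grid_add_mult:
  assumes "periodic_grid K v"
  shows "v (k + int K * j) = v k"
proof (induction j rule: int_induct[where k = 0])
  case base
  then show ?case by simp
next
  case (step1 i)
  have "v (k + int K * (i + 1)) = v ((k + int K * i) + int K)"
    by (simp add: algebra_simps)
  with assms step1 show ?case
    unfolding periodic_grid_def by simp
next
  case (step2 i)
  have "v (k + int K * i) = v ((k + int K * (i - 1)) + int K)"
    by (simp add: algebra_simps)
  with assms step2 show ?case
    unfolding periodic_grid_def by simp
qed

lemma periodic_grid_mod:
  assumes "periodic_grid K v"
  shows "v (k mod int K) = v k"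
  using periodic_grid_add_mult[OF assms, of "k mod int K" "k div int K"] by simp

lemma grid_norm_le_iff:
  assumes "periodic_grid K v" "K > 0"
  shows "grid_norm K v \<le> B \<longleftrightarrow> (\<forall>k. \<bar>v k\<bar> \<le> B)"
proof -
  have "grid_norm K v \<le> B \<longleftrightarrow> (\<forall>k\<in>{0..<int K}. \<bar>v k\<bar> \<le> B)"
    unfolding grid_norm_def using assms(2) by (subst Max_le_iff) auto
  also have "\<dots> \<longleftrightarrow> (\<forall>k. \<bar>v k\<bar> \<le> B)"
    using assms periodic_grid_mod[OF assms(1)] by (metis atLeastLessThan_iff of_nat_0_less_iff
        pos_mod_sign pos_mod_bound)
  finally show ?thesis .
qed

lemma periodic_grid_if_unique:
  assumes "\<exists>!w. P w" "P w" "\<And>w. P w \<Longrightarrow> P (\<lambda>k. w (k + int K))"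
  shows "periodic_grid K w"
proof -
  have "(\<lambda>k. w (k + int K)) = w"
    using assms by blast
  then show ?thesis
    unfolding periodic_grid_def by metis
qed

lemma abs_delta1_le:
  assumes "dx > 0" "\<And>j. \<bar>g j\<bar> \<le> B"
  shows "\<bar>delta1 dx g k\<bar> \<le> B / dx"
proof -
  have "\<bar>g (k + 1) - g (k - 1)\<bar> \<le> 2 * B"
    using assms(2)[of "k + 1"] assms(2)[of "k - 1"] by linarith
  then show ?thesis
    using assms(1) by (simp add: delta1_def abs_divide field_simps)
qed

lemma abs_delta1_delta2_le:
  assumes "dx > 0" "\<And>j. \<bar>g j\<bar> \<le> B"
  shows "\<bar>delta1 dx (delta2 dx g) k\<bar> \<le> 3 * B / dx ^ 3"
proof -
  have "delta1 dx (delta2 dx g) k = (g (k + 2) - 2 * g (k + 1) + 2 * g (k - 1) - g (k - 2)) / (2 * dx ^ 3)"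
    using assms(1) by (simp add: delta1_def delta2_def field_simps power2_eq_square power3_eq_cube)
  moreover have "\<bar>g (k + 2) - 2 * g (k + 1) + 2 * g (k - 1) - g (k - 2)\<bar> \<le> 6 * B"
    using assms(2)[of "k + 2"] assms(2)[of "k + 1"] assms(2)[of "k - 1"] assms(2)[of "k - 2"]
    by linarith
  ultimately show ?thesis
    using assms(1) by (simp add: abs_divide field_simps)
qed

lemma abs_scaled_combination_le:
  fixes t a b x y :: real
  assumes "t \<ge> 0"
  shows "\<bar>t * (a * x + b * y)\<bar> \<le> t * (\<bar>a\<bar> * \<bar>x\<bar> + \<bar>b\<bar> * \<bar>y\<bar>)"
  using assms abs_triangle_ineq[of "a * x" "b * y"] by (simp add: abs_mult mult_left_mono)

definition scheme_map :: "real \<Rightarrow> real \<Rightarrow> real \<Rightarrow> real \<Rightarrow> (int \<Rightarrow> real) \<Rightarrow> (int \<Rightarrow> real) \<Rightarrow> int \<Rightarrow> real"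
  where "scheme_map \<alpha> \<beta> dx dt v w k = v k + dt *
    (- (\<alpha> / 6) * delta1 dx (\<lambda>j. (w j)\<^sup>2 + w j * v j + (v j)\<^sup>2) k
      + \<beta> * delta1 dx (delta2 dx (\<lambda>j. (w j + v j) / 2)) k)"

lemma scheme_sol_iff_fixpoint:
  assumes "dt \<noteq> 0"
  shows "scheme_sol \<alpha> \<beta> dx dt v w \<longleftrightarrow> scheme_map \<alpha> \<beta> dx dt v w = w"
  using assms unfolding scheme_sol_def scheme_map_def fun_eq_iff
  by (auto simp: field_simps)

lemma scheme_map_shift:
  "scheme_map \<alpha> \<beta> dx dt (\<lambda>j. v (j + s)) (\<lambda>j. w (j + s)) k = scheme_map \<alpha> \<beta> dx dt v w (k + s)"
  by (simp add: scheme_map_def delta1_def delta2_def algebra_simps)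

lemma abs_scheme_map_le:
  assumes "dx > 0" "dt \<ge> 0" "\<And>j. \<bar>v j\<bar> \<le> r" "\<And>j. \<bar>w j\<bar> \<le> \<rho>"
  shows "\<bar>scheme_map \<alpha> \<beta> dx dt v w k\<bar>
    \<le> r + dt * (\<bar>\<alpha>\<bar> / 6 * (\<rho>\<^sup>2 + \<rho> * r + r\<^sup>2) / dx + 3 / 2 * \<bar>\<beta>\<bar> * (\<rho> + r) / dx ^ 3)"
proof -
  have quadratic: "\<bar>(w j)\<^sup>2 + w j * v j + (v j)\<^sup>2\<bar> \<le> \<rho>\<^sup>2 + \<rho> * r + r\<^sup>2" for j
  proof -
    have "\<bar>(w j)\<^sup>2 + w j * v j + (v j)\<^sup>2\<bar> \<le> \<bar>w j\<bar>\<^sup>2 + \<bar>w j\<bar> * \<bar>v j\<bar> + \<bar>v j\<bar>\<^sup>2"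
      by (simp add: abs_mult power2_eq_square order.trans[OF abs_triangle_ineq])
    also have "\<dots> \<le> \<rho>\<^sup>2 + \<rho> * r + r\<^sup>2"
      using assms(3,4)[of j] by (intro add_mono mult_mono power_mono) auto
    finally show ?thesis .
  qed
  have mean: "\<bar>(w j + v j) / 2\<bar> \<le> (\<rho> + r) / 2" for j
    using assms(3,4)[of j] by (simp add: abs_divide)
  have "\<bar>scheme_map \<alpha> \<beta> dx dt v w k\<bar> \<le> \<bar>v k\<bar> + dt *
      (\<bar>\<alpha>\<bar> / 6 * \<bar>delta1 dx (\<lambda>j. (w j)\<^sup>2 + w j * v j + (v j)\<^sup>2) k\<bar>
        + \<bar>\<beta>\<bar> * \<bar>delta1 dx (delta2 dx (\<lambda>j. (w j + v j) / 2)) k\<bar>)"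
    unfolding scheme_map_def
    using abs_scaled_combination_le[OF assms(2), of "- (\<alpha> / 6)" _ \<beta>]
    by (intro order.trans[OF abs_triangle_ineq] add_left_mono) simp
  also have "\<dots> \<le> r + dt * (\<bar>\<alpha>\<bar> / 6 * ((\<rho>\<^sup>2 + \<rho> * r + r\<^sup>2) / dx)
      + \<bar>\<beta>\<bar> * (3 * ((\<rho> + r) / 2) / dx ^ 3))"
    using assms(2,3) abs_delta1_le[OF assms(1) quadratic] abs_delta1_delta2_le[OF assms(1) mean]
    by (intro add_mono mult_left_mono) auto
  finally show ?thesis
    by (simp add: field_simps)
qed

lemma abs_scheme_map_diff_le:
  assumes "dx > 0" "dt \<ge> 0" "\<And>j. \<bar>v j\<bar> \<le> r"
    and "\<And>j. \<bar>f j\<bar> \<le> \<rho>" "\<And>j. \<bar>g j\<bar> \<le> \<rho>" "\<And>j. \<bar>f j - g j\<bar> \<le> D"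
  shows "\<bar>scheme_map \<alpha> \<beta> dx dt v f k - scheme_map \<alpha> \<beta> dx dt v g k\<bar>
    \<le> dt * (\<bar>\<alpha>\<bar> / 6 * (2 * \<rho> + r) / dx + 3 / 2 * \<bar>\<beta>\<bar> / dx ^ 3) * D"
proof -
  have product: "\<bar>(f j - g j) * (f j + g j + v j)\<bar> \<le> D * (2 * \<rho> + r)" for j
    unfolding abs_mult using assms(3-6)[of j] by (intro mult_mono) auto
  have "scheme_map \<alpha> \<beta> dx dt v f k - scheme_map \<alpha> \<beta> dx dt v g k =
      dt * (- (\<alpha> / 6) * delta1 dx (\<lambda>j. (f j - g j) * (f j + g j + v j)) k
        + \<beta> / 2 * delta1 dx (delta2 dx (\<lambda>j. f j - g j)) k)"
    using assms(1) by (simp add: scheme_map_def delta1_def delta2_def field_simps power2_eq_square)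
  also have "\<bar>\<dots>\<bar> \<le> dt * (\<bar>\<alpha>\<bar> / 6 * \<bar>delta1 dx (\<lambda>j. (f j - g j) * (f j + g j + v j)) k\<bar>
      + \<bar>\<beta>\<bar> / 2 * \<bar>delta1 dx (delta2 dx (\<lambda>j. f j - g j)) k\<bar>)"
    using abs_scaled_combination_le[OF assms(2), of "- (\<alpha> / 6)" _ "\<beta> / 2"] by simp
  also have "\<dots> \<le> dt * (\<bar>\<alpha>\<bar> / 6 * (D * (2 * \<rho> + r) / dx) + \<bar>\<beta>\<bar> / 2 * (3 * D / dx ^ 3))"
    using assms(2) abs_delta1_le[OF assms(1) product] abs_delta1_delta2_le[OF assms(1) assms(6)]
    by (intro add_mono mult_left_mono) auto
  finally show ?thesis
    by (simp add: field_simps)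
qed

lemma less_divide_imp_mult_less:
  fixes t a b :: real
  assumes "0 < t" "t < a / b" "0 \<le> b"
  shows "t * b < a"
proof -
  have "b > 0"
    using assms by (cases "b = 0") auto
  then show ?thesis
    using assms(2) by (simp add: pos_less_divide_eq)
qed

lemma less_eps1_imp_growth_le:
  assumes "dx > 0" "dt > 0" "r \<ge> 0" "q > 1" "dt < eps1 \<alpha> \<beta> q r dx"
  shows "r + dt * (\<bar>\<alpha>\<bar> / 6 * ((q * r)\<^sup>2 + q * r * r + r\<^sup>2) / dx + 3 / 2 * \<bar>\<beta>\<bar> * (q * r + r) / dx ^ 3)
    \<le> q * r"
proof -
  let ?den = "\<bar>\<alpha>\<bar> / 6 * dx\<^sup>2 * (q\<^sup>2 + q + 1) * r + 3 / 2 * \<bar>\<beta>\<bar> * (q + 1)"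
  have "dt * ?den < (q - 1) * dx ^ 3"
    using assms less_divide_imp_mult_less[of dt "(q - 1) * dx ^ 3" ?den]
    unfolding eps1_def by fastforce
  then have "dt * ?den / dx ^ 3 \<le> q - 1"
    using assms(1) by (simp add: divide_le_eq)
  then have "r + r * (dt * ?den / dx ^ 3) \<le> r + r * (q - 1)"
    using assms(3) by (intro add_left_mono mult_left_mono) auto
  moreover have "r + dt * (\<bar>\<alpha>\<bar> / 6 * ((q * r)\<^sup>2 + q * r * r + r\<^sup>2) / dx
      + 3 / 2 * \<bar>\<beta>\<bar> * (q * r + r) / dx ^ 3) = r + r * (dt * ?den / dx ^ 3)"
    using assms(1) by (simp add: field_simps power2_eq_square power3_eq_cube)
  ultimately show ?thesis
    by (simp add: algebra_simps)
qed

lemma less_eps2_imp_lipschitz_less_1: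
  assumes "dx > 0" "dt > 0" "r \<ge> 0" "q \<ge> 0" "dt < eps2 \<alpha> \<beta> q r dx"
  shows "dt * (\<bar>\<alpha>\<bar> / 6 * (2 * (q * r) + r) / dx + 3 / 2 * \<bar>\<beta>\<bar> / dx ^ 3) < 1"
proof -
  let ?den = "\<bar>\<alpha>\<bar> / 6 * dx\<^sup>2 * (2 * q + 1) * r + 3 / 2 * \<bar>\<beta>\<bar>"
  have "dt * ?den < dx ^ 3"
    using assms less_divide_imp_mult_less[of dt "dx ^ 3" ?den]
    unfolding eps2_def by fastforce
  then show ?thesis
    using assms(1) by (simp add: field_simps power2_eq_square power3_eq_cube)
qed

lemma scheme_map_sup_contraction:
  assumes "dx > 0" "dt > 0" "q > 1" "r \<ge> 0" "\<And>k. \<bar>v k\<bar> \<le> r"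
    and "dt < eps1 \<alpha> \<beta> q r dx" "dt < eps2 \<alpha> \<beta> q r dx"
  shows "sup_contraction (scheme_map \<alpha> \<beta> dx dt v) (q * r)
    (dt * (\<bar>\<alpha>\<bar> / 6 * (2 * (q * r) + r) / dx + 3 / 2 * \<bar>\<beta>\<bar> / dx ^ 3))"
proof
  show "0 \<le> q * r" "0 \<le> dt * (\<bar>\<alpha>\<bar> / 6 * (2 * (q * r) + r) / dx + 3 / 2 * \<bar>\<beta>\<bar> / dx ^ 3)"
    using assms(1-4) by simp_all
  show "dt * (\<bar>\<alpha>\<bar> / 6 * (2 * (q * r) + r) / dx + 3 / 2 * \<bar>\<beta>\<bar> / dx ^ 3) < 1"
    using less_eps2_imp_lipschitz_less_1 assms by simp
  show "norm (scheme_map \<alpha> \<beta> dx dt v w k) \<le> q * r" if "\<And>j. norm (w j) \<le> q * r" for w k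
  proof -
    have "\<bar>scheme_map \<alpha> \<beta> dx dt v w k\<bar> \<le> r + dt * (\<bar>\<alpha>\<bar> / 6 * ((q * r)\<^sup>2 + q * r * r + r\<^sup>2) / dx
        + 3 / 2 * \<bar>\<beta>\<bar> * (q * r + r) / dx ^ 3)"
      using that assms(2) by (intro abs_scheme_map_le[OF assms(1) _ assms(5)]) simp_all
    also have "\<dots> \<le> q * r"
      using less_eps1_imp_growth_le assms(1-4,6) by blast
    finally show ?thesis
      by simp
  qed
  show "norm (scheme_map \<alpha> \<beta> dx dt v f k - scheme_map \<alpha> \<beta> dx dt v g k)
      \<le> dt * (\<bar>\<alpha>\<bar> / 6 * (2 * (q * r) + r) / dx + 3 / 2 * \<bar>\<beta>\<bar> / dx ^ 3) * D"
    if "\<And>j. norm (f j) \<le> q * r" "\<And>j. norm (g j) \<le> q * r" "\<And>j. norm (f j - g j) \<le> D" for f g D k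
    using that abs_scheme_map_diff_le[OF assms(1) _ assms(5), where f = f and g = g and \<rho> = "q * r"]
      assms(2) by simp
qed

lemma ex1_periodic_solution_if_ex1_fixpoint:
  assumes "K > 0" "dt \<noteq> 0" "periodic_grid K v"
    and unique: "\<exists>!w. (\<forall>k. norm (w k) \<le> R) \<and> scheme_map \<alpha> \<beta> dx dt v w = w"
  shows "\<exists>!w. periodic_grid K w \<and> scheme_sol \<alpha> \<beta> dx dt v w \<and> grid_norm K w \<le> R"
proof -
  have v_shift: "(\<lambda>j. v (j + int K)) = v"
    using assms(3) by (simp add: periodic_grid_def)
  have "(\<forall>k. norm (w (k + int K)) \<le> R) \<and> scheme_map \<alpha> \<beta> dx dt v (\<lambda>k. w (k + int K)) = (\<lambda>k. w (k + int K))"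
    if "(\<forall>k. norm (w k) \<le> R) \<and> scheme_map \<alpha> \<beta> dx dt v w = w" for w
    using that scheme_map_shift[of \<alpha> \<beta> dx dt v "int K" w] by (simp add: v_shift fun_eq_iff)
  then have bounded_fixpoint_periodic: "periodic_grid K w"
    if "(\<forall>k. norm (w k) \<le> R) \<and> scheme_map \<alpha> \<beta> dx dt v w = w" for w
    using periodic_grid_if_unique[OF unique that] by blast
  have "periodic_grid K w \<and> scheme_sol \<alpha> \<beta> dx dt v w \<and> grid_norm K w \<le> R
      \<longleftrightarrow> (\<forall>k. norm (w k) \<le> R) \<and> scheme_map \<alpha> \<beta> dx dt v w = w" for w
  proof
    assume "periodic_grid K w \<and> scheme_sol \<alpha> \<beta> dx dt v w \<and> grid_norm K w \<le> R"
    then show "(\<forall>k. norm (w k) \<le> R) \<and> scheme_map \<alpha> \<beta> dx dt v w = w"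
      using grid_norm_le_iff[of K w R] assms(1) scheme_sol_iff_fixpoint[OF assms(2)] by simp
  next
    assume "(\<forall>k. norm (w k) \<le> R) \<and> scheme_map \<alpha> \<beta> dx dt v w = w"
    moreover from this have "periodic_grid K w"
      by (rule bounded_fixpoint_periodic)
    ultimately show "periodic_grid K w \<and> scheme_sol \<alpha> \<beta> dx dt v w \<and> grid_norm K w \<le> R"
      using grid_norm_le_iff[OF _ assms(1)] scheme_sol_iff_fixpoint[OF assms(2)] by simp
  qed
  with unique show ?thesis
    by simp
qed

theorem theorem3p1:
  fixes L dt \<alpha> \<beta> q r :: real and K m :: nat and u :: "nat \<Rightarrow> int \<Rightarrow> real"
  assumes "L > 0" and "K > 0" and "dt > 0" and "\<beta> \<noteq> 0" and "q > 1"
    and "\<forall>n\<le>m. periodic_grid K (u n)"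
    and "\<forall>n<m. scheme_sol \<alpha> \<beta> (L / real K) dt (u n) (u (Suc n))"
    and "\<forall>n\<le>m. grid_norm K (u n) \<le> r"
    and "dt < min (eps1 \<alpha> \<beta> q r (L / real K)) (eps2 \<alpha> \<beta> q r (L / real K))"
  shows "\<exists>!w. periodic_grid K w \<and> scheme_sol \<alpha> \<beta> (L / real K) dt (u m) w
              \<and> grid_norm K w \<le> q * r"
proof (rule ex1_periodic_solution_if_ex1_fixpoint)
  have "L / real K > 0" "periodic_grid K (u m)"
    using assms(1,2,6) by simp_all
  moreover have "\<bar>u m k\<bar> \<le> r" for k
    using assms(8)[rule_format, of m] grid_norm_le_iff[OF \<open>periodic_grid K (u m)\<close> assms(2)] by simp
  moreover from this have "r \<ge> 0"
    by (meson abs_ge_zero order.trans)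
  ultimately show "\<exists>!w. (\<forall>k. norm (w k) \<le> q * r) \<and> scheme_map \<alpha> \<beta> (L / real K) dt (u m) w = w"
    using assms(3,5,9) by (intro sup_contraction.ex1_fixpoint[OF scheme_map_sup_contraction]) simp_all
qed (use assms(2,3,6) in simp_all)

end
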